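(* Let $\rho$ be a measure on $(0,\infty)$ such that $\mathfrak{A}(\rho)$ is definable. Then for $\alpha>-1$ and $b>0$, $$\int_{(b,\infty)}u^\alpha\,\mathfrak{A}(\rho)(\mathrm{d}u)\le C_1\int_{(b,\infty)}s^{\alpha+1/2}\rho(\mathrm{d}s)$$ and $$\int_{(0,b]}u^\alpha\,\mathfrak{A}(\rho)(\mathrm{d}u)\le C_2\Big(\int_{(0,b]}s^{\alpha+1/2}\rho(\mathrm{d}s)+\int_{(b,\infty)}s^{-1/2}\rho(\mathrm{d}s)\Big),$$ where $C_1$ and $C_2$ are constants independent of $\rho$.
   Context: For a measure $\rho$ on $(0,\infty)$, $\mathfrak{A}(\rho)$ is said to be definable if the function $u\mapsto\int_{(u,\infty)}\pi^{-1/2}(s-u)^{-1/2}\rho(\mathrm{d}s)$ is the Lebesgue density on $(0,\infty)$ of a measure $\sigma$ on $(0,\infty)$ that is locally finite (i.e. $\sigma((b,c))<\infty$ for $0<b<c<\infty$); then $\mathfrak{A}(\rho)$ denotes that measure. *)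

theory Defs
  imports "HOL-Analysis.Analysis"
begin

text \<open>A measure on (0,infinity) is modelled as a Borel measure on the reals
  giving no mass to {..0}.\<close>
definition measure_on_pos :: "real measure \<Rightarrow> bool" where
  "measure_on_pos \<rho> \<longleftrightarrow> sets \<rho> = sets borel \<and> emeasure \<rho> {..0} = 0"

definition abel_dens :: "real measure \<Rightarrow> real \<Rightarrow> ennreal" where
  "abel_dens \<rho> u = (\<integral>\<^sup>+ s. indicator {u<..} s * ennreal (1 / (sqrt pi * sqrt (s - u))) \<partial>\<rho>)"

definition frakA :: "real measure \<Rightarrow> real measure" where
  "frakA \<rho> = density lborel (\<lambda>u. indicator {0<..} u * abel_dens \<rho> u)"

definition frakA_definable :: "real measure \<Rightarrow> bool" where
  "frakA_definable \<rho> \<longleftrightarrow>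
     (\<forall>b c. 0 < b \<longrightarrow> b < c \<longrightarrow> emeasure (frakA \<rho>) {b<..<c} < \<infinity>)"

end

theory Submission
  imports Defs
begin

(* Exchanging the order of integration (Tonelli) gives
     int_I u^alpha frakA(rho)(du) = pi^(-1/2) int (int_{I cap (0,s)} u^alpha (s-u)^(-1/2) du) rho(ds),
   so both estimates reduce to bounds for the inner kernel integral. Over all of (0,s) the
   substitution u = s t makes it exactly B(alpha+1, 1/2) s^(alpha+1/2); over (0,b] with s > b it is
   O(s^(-1/2)), because s - u >= s/2 as soon as s >= 2b.
   Tonelli needs rho to be sigma-finite. The Abel density D is lower semicontinuous by Fatou's lemma,
   hence measurable, and local finiteness of frakA(rho) makes D finite at points u just to the left
   of any s > 0, where rho((u,u+1)) <= sqrt pi * D(u). *)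

lemma Beta_real_nonneg:
  fixes a b :: real
  assumes "a > 0" and "b > 0"
  shows "Beta a b \<ge> 0"
  using assms by (simp add: Beta_def)

lemma nn_integral_powr_div_sqrt_diff:
  fixes \<alpha> s :: real
  assumes \<alpha>: "\<alpha> > -1" and s: "s > 0"
  shows "(\<integral>\<^sup>+u\<in>{0<..<s}. ennreal (u powr \<alpha> / sqrt (s - u)) \<partial>lborel)
           = ennreal (Beta (\<alpha> + 1) (1/2) * s powr (\<alpha> + 1/2))"
proof -
  have "((\<lambda>t. t powr \<alpha> * (1 - t) powr - (1/2)) has_integral Beta (\<alpha> + 1) (1/2)) {0<..<1}"
    using has_integral_Beta_real[of "\<alpha> + 1" "1/2"] \<alpha> by (simp add: has_integral_Icc_iff_Ioo)
  hence beta: "(\<integral>\<^sup>+t\<in>{0<..<1}. ennreal (t powr \<alpha> * (1 - t) powr - (1/2)) \<partial>lborel)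
                 = ennreal (Beta (\<alpha> + 1) (1/2))"
    by (intro nn_integral_has_integral_lebesgue') auto
  have scale: "ennreal ((s * t) powr \<alpha> / sqrt (s - s * t)) * indicator {0<..<s} (s * t)
      = ennreal (s powr (\<alpha> - 1/2)) * (ennreal (t powr \<alpha> * (1 - t) powr - (1/2)) * indicator {0<..<1} t)"
    for t
  proof (cases "0 < t \<and> t < 1")
    case True
    have "sqrt (s - s * t) = sqrt s * sqrt (1 - t)"
      by (simp add: right_diff_distrib real_sqrt_mult[symmetric])
    moreover have "s powr (\<alpha> - 1/2) = s powr \<alpha> / sqrt s"
      using s by (simp add: powr_diff powr_half_sqrt)
    moreover have "(1 - t) powr - (1/2) = 1 / sqrt (1 - t)"
      using True by (simp add: powr_minus_divide powr_half_sqrt)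
    ultimately have "(s * t) powr \<alpha> / sqrt (s - s * t) = s powr (\<alpha> - 1/2) * (t powr \<alpha> * (1 - t) powr - (1/2))"
      using True s by (simp add: powr_mult)
    thus ?thesis using True s by (simp add: ennreal_mult[symmetric])
  qed (use s in \<open>auto simp: indicator_def zero_less_mult_iff\<close>)
  have "(\<integral>\<^sup>+u\<in>{0<..<s}. ennreal (u powr \<alpha> / sqrt (s - u)) \<partial>lborel)
      = ennreal s * (\<integral>\<^sup>+t. ennreal ((s * t) powr \<alpha> / sqrt (s - s * t)) * indicator {0<..<s} (s * t) \<partial>lborel)"
  proof -
    have "(\<lambda>u. ennreal (u powr \<alpha> / sqrt (s - u)) * indicator {0<..<s} u) \<in> borel_measurable borel"
      by measurable
    from nn_integral_real_affine[OF this, of s 0] show ?thesis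
      using s by (simp only: add_0 abs_of_pos)
  qed
  also have "\<dots> = ennreal s * ennreal (s powr (\<alpha> - 1/2)) * ennreal (Beta (\<alpha> + 1) (1/2))"
    by (simp add: scale nn_integral_cmult beta mult.assoc)
  also have "\<dots> = ennreal (Beta (\<alpha> + 1) (1/2) * s powr (\<alpha> + 1/2))"
  proof -
    have "s * s powr (\<alpha> - 1/2) = s powr (\<alpha> + 1/2)"
      using powr_mult_base[of s "\<alpha> - 1/2"] s by (simp add: add.commute)
    moreover have "Beta (\<alpha> + 1) (1/2) \<ge> 0" using \<alpha> by (simp add: Beta_real_nonneg)
    ultimately show ?thesis using s by (simp add: ennreal_mult[symmetric] mult.commute)
  qed
  finally show ?thesis .
qed

lemma nn_integral_Ioc_powr_div_sqrt_diff_far: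
  fixes \<alpha> b s :: real
  assumes \<alpha>: "\<alpha> > -1" and b: "b > 0" and s: "2 * b \<le> s"
  shows "(\<integral>\<^sup>+u\<in>{0<..b}. ennreal (u powr \<alpha> / sqrt (s - u)) \<partial>lborel)
           \<le> ennreal (sqrt 2 * b powr (\<alpha> + 1) / (\<alpha> + 1) * s powr (-1/2))"
proof -
  have "(\<integral>\<^sup>+u\<in>{0<..b}. ennreal (u powr \<alpha> / sqrt (s - u)) \<partial>lborel)
      \<le> (\<integral>\<^sup>+u\<in>{0..b}. ennreal (sqrt 2 / sqrt s) * ennreal (u powr \<alpha>) \<partial>lborel)"
  proof (rule nn_integral_mono)
    fix u
    show "ennreal (u powr \<alpha> / sqrt (s - u)) * indicator {0<..b} u
        \<le> ennreal (sqrt 2 / sqrt s) * ennreal (u powr \<alpha>) * indicator {0..b} u"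
    proof (cases "u \<in> {0<..b}")
      case True
      have "sqrt s \<le> sqrt 2 * sqrt (s - u)"
        unfolding real_sqrt_mult[symmetric] using True s by simp
      hence "1 / sqrt (s - u) \<le> sqrt 2 / sqrt s"
        using True s b by (simp add: field_simps)
      hence "u powr \<alpha> / sqrt (s - u) \<le> sqrt 2 / sqrt s * u powr \<alpha>"
        using mult_left_mono[of "1 / sqrt (s - u)" "sqrt 2 / sqrt s" "u powr \<alpha>"] by (simp add: mult.commute)
      hence "ennreal (u powr \<alpha> / sqrt (s - u)) \<le> ennreal (sqrt 2 / sqrt s) * ennreal (u powr \<alpha>)"
        using s b by (subst ennreal_mult[symmetric]) (auto intro: ennreal_leI)
      thus ?thesis using True by simp
    qed simp
  qed
  also have "\<dots> = ennreal (sqrt 2 / sqrt s) * ennreal (b powr (\<alpha> + 1) / (\<alpha> + 1))"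
    using nn_integral_has_integral_lebesgue'[OF _ has_integral_powr_from_0[OF \<alpha>, of b]] b
    by (simp add: nn_integral_cmult mult.assoc)
  also have "\<dots> = ennreal (sqrt 2 * b powr (\<alpha> + 1) / (\<alpha> + 1) * s powr (-1/2))"
  proof -
    have "s powr (-1/2) = 1 / sqrt s"
      using s b by (simp add: powr_minus_divide powr_half_sqrt)
    thus ?thesis using \<alpha> b s by (simp add: ennreal_mult[symmetric])
  qed
  finally show ?thesis .
qed

lemma nn_integral_Ioc_powr_div_sqrt_diff_decay:
  fixes \<alpha> b :: real
  assumes \<alpha>: "\<alpha> > -1" and b: "b > 0"
  obtains C where "C \<ge> 0"
    and "\<And>s. b < s \<Longrightarrow> (\<integral>\<^sup>+u\<in>{0<..b}. ennreal (u powr \<alpha> / sqrt (s - u)) \<partial>lborel)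
                          \<le> ennreal (C * s powr (-1/2))"
proof
  define B where "B = Beta (\<alpha> + 1) (1/2)"
  have B: "B \<ge> 0" using \<alpha> by (simp add: B_def Beta_real_nonneg)
  show "sqrt 2 * b powr (\<alpha> + 1) / (\<alpha> + 1) + B * (2 * b) powr (\<alpha> + 1) \<ge> 0"
    using \<alpha> B by simp
  fix s assume s: "b < s"
  show "(\<integral>\<^sup>+u\<in>{0<..b}. ennreal (u powr \<alpha> / sqrt (s - u)) \<partial>lborel)
          \<le> ennreal ((sqrt 2 * b powr (\<alpha> + 1) / (\<alpha> + 1) + B * (2 * b) powr (\<alpha> + 1)) * s powr (-1/2))"
  proof (cases "2 * b \<le> s")
    case True
    note nn_integral_Ioc_powr_div_sqrt_diff_far[OF \<alpha> b True]
    also have "ennreal (sqrt 2 * b powr (\<alpha> + 1) / (\<alpha> + 1) * s powr (-1/2))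
        \<le> ennreal ((sqrt 2 * b powr (\<alpha> + 1) / (\<alpha> + 1) + B * (2 * b) powr (\<alpha> + 1)) * s powr (-1/2))"
      using B by (intro ennreal_leI mult_right_mono) auto
    finally show ?thesis .
  next
    case False
    have "(\<integral>\<^sup>+u\<in>{0<..b}. ennreal (u powr \<alpha> / sqrt (s - u)) \<partial>lborel)
        \<le> (\<integral>\<^sup>+u\<in>{0<..<s}. ennreal (u powr \<alpha> / sqrt (s - u)) \<partial>lborel)"
      using s by (intro nn_integral_mono) (auto simp: indicator_def)
    also have "\<dots> = ennreal (B * s powr (\<alpha> + 1/2))"
      unfolding B_def using \<alpha> b s by (intro nn_integral_powr_div_sqrt_diff) auto
    also have "B * s powr (\<alpha> + 1/2) = B * s powr (\<alpha> + 1) * s powr (-1/2)"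
      using b s by (simp add: mult.assoc powr_add[symmetric] add.commute)
    also have "\<dots> \<le> B * (2 * b) powr (\<alpha> + 1) * s powr (-1/2)"
      using False \<alpha> b s B by (intro mult_right_mono mult_left_mono powr_mono2) auto
    also have "\<dots> \<le> (sqrt 2 * b powr (\<alpha> + 1) / (\<alpha> + 1) + B * (2 * b) powr (\<alpha> + 1)) * s powr (-1/2)"
      using \<alpha> by (intro mult_right_mono) auto
    finally show ?thesis by (simp add: ennreal_leI)
  qed
qed

lemma nn_integral_Ioc_powr_div_sqrt_diff_bound:
  fixes \<alpha> b :: real
  assumes \<alpha>: "\<alpha> > -1" and b: "b > 0"
  obtains C where "C \<ge> 0"
    and "\<And>s. 0 < s \<Longrightarrow> (\<integral>\<^sup>+u\<in>{0<..b} \<inter> {0<..<s}. ennreal (u powr \<alpha> / sqrt (s - u)) \<partial>lborel)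
                \<le> ennreal C * (ennreal (s powr (\<alpha> + 1/2)) * indicator {0<..b} s
                                + ennreal (s powr (-1/2)) * indicator {b<..} s)"
proof -
  obtain K where K: "K \<ge> 0" and decay: "\<And>s. b < s \<Longrightarrow>
      (\<integral>\<^sup>+u\<in>{0<..b}. ennreal (u powr \<alpha> / sqrt (s - u)) \<partial>lborel) \<le> ennreal (K * s powr (-1/2))"
    using nn_integral_Ioc_powr_div_sqrt_diff_decay[OF \<alpha> b] by blast
  define B where "B = Beta (\<alpha> + 1) (1/2)"
  have B: "B \<ge> 0" using \<alpha> by (simp add: B_def Beta_real_nonneg)
  show ?thesis
  proof (rule that)
    show "B + K \<ge> 0" using B K by simp
    fix s :: real assume s: "0 < s"
    show "(\<integral>\<^sup>+u\<in>{0<..b} \<inter> {0<..<s}. ennreal (u powr \<alpha> / sqrt (s - u)) \<partial>lborel)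
        \<le> ennreal (B + K) * (ennreal (s powr (\<alpha> + 1/2)) * indicator {0<..b} s
                              + ennreal (s powr (-1/2)) * indicator {b<..} s)"
    proof (cases "s \<le> b")
      case True
      have "(\<integral>\<^sup>+u\<in>{0<..b} \<inter> {0<..<s}. ennreal (u powr \<alpha> / sqrt (s - u)) \<partial>lborel)
          \<le> (\<integral>\<^sup>+u\<in>{0<..<s}. ennreal (u powr \<alpha> / sqrt (s - u)) \<partial>lborel)"
        by (intro nn_integral_mono) (auto simp: indicator_def)
      also have "\<dots> = ennreal (B * s powr (\<alpha> + 1/2))"
        unfolding B_def by (rule nn_integral_powr_div_sqrt_diff[OF \<alpha> s])
      also have "\<dots> \<le> ennreal ((B + K) * s powr (\<alpha> + 1/2))"
        using K by (intro ennreal_leI mult_right_mono) auto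
      finally show ?thesis using True s B K by (simp add: ennreal_mult)
    next
      case False
      hence "{0<..b} \<inter> {0<..<s} = {0<..b}" by auto
      hence "(\<integral>\<^sup>+u\<in>{0<..b} \<inter> {0<..<s}. ennreal (u powr \<alpha> / sqrt (s - u)) \<partial>lborel)
          \<le> ennreal (K * s powr (-1/2))"
        using decay[of s] False by simp
      also have "\<dots> \<le> ennreal ((B + K) * s powr (-1/2))"
        using B by (intro ennreal_leI mult_right_mono) auto
      finally show ?thesis using False B K by (simp add: ennreal_mult)
    qed
  qed
qed

definition abel_kernel :: "real \<Rightarrow> real \<Rightarrow> ennreal" where
  "abel_kernel u s = indicator {u<..} s * ennreal (1 / (sqrt pi * sqrt (s - u)))"

lemma abel_dens_eq_nn_integral_kernel: "abel_dens \<rho> u = (\<integral>\<^sup>+s. abel_kernel u s \<partial>\<rho>)"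
  unfolding abel_dens_def abel_kernel_def ..

lemma abel_kernel_if: "abel_kernel u s = (if u < s then ennreal (1 / (sqrt pi * sqrt (s - u))) else 0)"
  by (simp add: abel_kernel_def)

lemma borel_measurable_abel_kernel[measurable (raw)]:
  assumes [measurable]: "f \<in> borel_measurable M" "g \<in> borel_measurable M"
  shows "(\<lambda>x. abel_kernel (f x) (g x)) \<in> borel_measurable M"
  unfolding abel_kernel_if by measurable

lemma abel_kernel_measurable:
  assumes "sets \<rho> = sets borel"
  shows "abel_kernel u \<in> borel_measurable \<rho>"
  unfolding measurable_cong_sets[OF assms refl] by measurable

lemma abel_kernel_le_liminf:
  assumes "x \<longlonglongrightarrow> u"
  shows "abel_kernel u s \<le> liminf (\<lambda>n. abel_kernel (x n) s)"
proof (cases "u < s")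
  case True
  define f where "f t = ennreal (1 / (sqrt pi * sqrt (s - t)))" for t
  have ev: "eventually (\<lambda>n. x n < s) sequentially"
    using assms True by (simp add: order_tendstoD(2))
  have "(\<lambda>n. f (x n)) \<longlonglongrightarrow> f u"
    unfolding f_def by (intro tendsto_intros assms) (use True in auto)
  hence "(\<lambda>n. abel_kernel (x n) s) \<longlonglongrightarrow> f u"
    by (rule Lim_transform_eventually) (use ev in \<open>auto elim!: eventually_mono simp: abel_kernel_if f_def\<close>)
  hence "liminf (\<lambda>n. abel_kernel (x n) s) = f u" by (intro lim_imp_Liminf) auto
  thus ?thesis using True by (simp add: abel_kernel_if f_def)
qed (simp add: abel_kernel_if)

lemma closed_abel_dens_sublevel:
  assumes "sets \<rho> = sets borel"
  shows "closed {u. abel_dens \<rho> u \<le> t}"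
  unfolding closed_sequential_limits
proof (intro allI impI, elim conjE)
  fix x u assume x: "\<forall>n. x n \<in> {u. abel_dens \<rho> u \<le> t}" and lim: "x \<longlonglongrightarrow> u"
  have "abel_dens \<rho> u \<le> (\<integral>\<^sup>+s. liminf (\<lambda>n. abel_kernel (x n) s) \<partial>\<rho>)"
    unfolding abel_dens_eq_nn_integral_kernel by (intro nn_integral_mono abel_kernel_le_liminf lim)
  also have "\<dots> \<le> liminf (\<lambda>n. abel_dens \<rho> (x n))"
    unfolding abel_dens_eq_nn_integral_kernel by (intro nn_integral_liminf abel_kernel_measurable assms)
  also have "\<dots> \<le> t"
    using x Liminf_mono[of "\<lambda>n. abel_dens \<rho> (x n)" "\<lambda>n. t" sequentially] by (simp add: Liminf_const)
  finally show "u \<in> {u. abel_dens \<rho> u \<le> t}" by simp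
qed

lemma borel_measurable_abel_dens:
  assumes "sets \<rho> = sets borel"
  shows "abel_dens \<rho> \<in> borel_measurable borel"
proof (rule borel_measurableI_greater)
  fix t
  have "{u \<in> space borel. t < abel_dens \<rho> u} = - {u. abel_dens \<rho> u \<le> t}" by auto
  thus "{u \<in> space borel. t < abel_dens \<rho> u} \<in> sets borel"
    using closed_abel_dens_sublevel[OF assms] by (simp add: open_Compl)
qed

lemma abel_dens_finite_in_interval:
  assumes "measure_on_pos \<rho>" and "frakA_definable \<rho>" and "0 < a" "a < c"
  shows "\<exists>u\<in>{a<..<c}. abel_dens \<rho> u < \<infinity>"
proof (rule ccontr)
  assume "\<not> ?thesis"
  hence top: "abel_dens \<rho> u = \<infinity>" if "u \<in> {a<..<c}" for u
    using that by (simp add: less_top[symmetric])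
  have "sets \<rho> = sets borel" using assms(1) by (simp add: measure_on_pos_def)
  note [measurable] = borel_measurable_abel_dens[OF this]
  have "emeasure (frakA \<rho>) {a<..<c}
      = (\<integral>\<^sup>+u. indicator {0<..} u * abel_dens \<rho> u * indicator {a<..<c} u \<partial>lborel)"
    unfolding frakA_def by (rule emeasure_density) auto
  also have "\<dots> = (\<integral>\<^sup>+u. \<infinity> * indicator {a<..<c} u \<partial>lborel)"
    using top \<open>0 < a\<close> by (intro nn_integral_cong) (auto simp: indicator_def)
  also have "\<dots> = \<infinity> * emeasure lborel {a<..<c}"
    by (rule nn_integral_cmult_indicator) simp
  also have "\<dots> = \<infinity>"
    using \<open>a < c\<close> by (simp add: ennreal_top_mult)
  finally have "emeasure (frakA \<rho>) {a<..<c} = \<infinity>" .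
  moreover have "emeasure (frakA \<rho>) {a<..<c} < \<infinity>"
    using assms unfolding frakA_definable_def by blast
  ultimately show False by simp
qed

lemma emeasure_Ioo_le_abel_dens:
  assumes "sets \<rho> = sets borel"
  shows "emeasure \<rho> {u<..<u+1} \<le> ennreal (sqrt pi) * abel_dens \<rho> u"
proof -
  have "emeasure \<rho> {u<..<u+1} = (\<integral>\<^sup>+s. indicator {u<..<u+1} s \<partial>\<rho>)"
    using assms by simp
  also have "\<dots> \<le> (\<integral>\<^sup>+s. ennreal (sqrt pi) * abel_kernel u s \<partial>\<rho>)"
  proof (rule nn_integral_mono)
    fix s
    show "indicator {u<..<u+1} s \<le> ennreal (sqrt pi) * abel_kernel u s"
    proof (cases "s \<in> {u<..<u+1}")
      case True
      hence "1 \<le> 1 / sqrt (s - u)" by (simp add: field_simps)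
      thus ?thesis using True
        by (simp add: abel_kernel_if ennreal_mult[symmetric])
    qed simp
  qed
  also have "\<dots> = ennreal (sqrt pi) * abel_dens \<rho> u"
    unfolding abel_dens_eq_nn_integral_kernel
    by (rule nn_integral_cmult) (rule abel_kernel_measurable[OF assms])
  finally show ?thesis .
qed

lemma sigma_finite_if_frakA_definable:
  assumes mp: "measure_on_pos \<rho>" and df: "frakA_definable \<rho>"
  shows "sigma_finite_measure \<rho>"
proof
  have sets: "sets \<rho> = sets borel" and null: "emeasure \<rho> {..0} = 0"
    using mp by (auto simp: measure_on_pos_def)
  define F where "F = (\<lambda>u. {u<..<u+1}) ` {u. 0 < u \<and> abel_dens \<rho> u < \<infinity>}"
  have cover: "\<Union>F = {0<..}"
  proof
    show "{0<..} \<subseteq> \<Union>F"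
    proof
      fix x :: real assume x: "x \<in> {0<..}"
      hence "0 < max (x/2) (x-1)" "max (x/2) (x-1) < x" by auto
      then obtain u where "u \<in> {max (x/2) (x-1)<..<x}" "abel_dens \<rho> u < \<infinity>"
        using abel_dens_finite_in_interval[OF mp df] by blast
      hence "{u<..<u+1} \<in> F" "x \<in> {u<..<u+1}" using x unfolding F_def by auto
      thus "x \<in> \<Union>F" by blast
    qed
  qed (auto simp: F_def)
  obtain F' where F': "F' \<subseteq> F" "countable F'" "\<Union>F' = \<Union>F"
    by (rule Lindelof[of F]) (auto simp: F_def)
  show "\<exists>A. countable A \<and> A \<subseteq> sets \<rho> \<and> \<Union>A = space \<rho> \<and> (\<forall>a\<in>A. emeasure \<rho> a \<noteq> \<infinity>)"
  proof (intro exI[of _ "insert {..0} F'"] conjI ballI)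
    show "countable (insert {..0} F')" using F' by simp
    show "insert {..0} F' \<subseteq> sets \<rho>" using F' sets unfolding F_def by auto
    show "\<Union>(insert {..0} F') = space \<rho>"
      using F'(3) cover sets_eq_imp_space_eq[OF sets] by auto
    fix A assume "A \<in> insert {..0} F'"
    then consider "A = {..0}" | u where "abel_dens \<rho> u < \<infinity>" "A = {u<..<u+1}"
      using F' unfolding F_def by auto
    thus "emeasure \<rho> A \<noteq> \<infinity>"
    proof cases
      case (2 u)
      have "emeasure \<rho> A \<le> ennreal (sqrt pi) * abel_dens \<rho> u"
        using 2 emeasure_Ioo_le_abel_dens[OF sets] by simp
      also have "\<dots> < \<infinity>" using 2 by (simp add: ennreal_mult_less_top)
      finally show ?thesis by simp
    qed (simp add: null)
  qed
qed

lemma nn_integral_frakA: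
  assumes mp: "measure_on_pos \<rho>" and df: "frakA_definable \<rho>"
    and w[measurable]: "w \<in> borel_measurable borel"
  shows "(\<integral>\<^sup>+u. w u \<partial>frakA \<rho>)
           = (\<integral>\<^sup>+s. (\<integral>\<^sup>+u. w u * (indicator {0<..} u * abel_kernel u s) \<partial>lborel) \<partial>\<rho>)"
proof -
  have sets: "sets \<rho> = sets borel" using mp by (simp add: measure_on_pos_def)
  note [measurable] = borel_measurable_abel_dens[OF sets]
  interpret \<rho>: sigma_finite_measure \<rho> by (rule sigma_finite_if_frakA_definable[OF mp df])
  interpret pair_sigma_finite lborel \<rho> ..
  have "(\<integral>\<^sup>+u. w u \<partial>frakA \<rho>) = (\<integral>\<^sup>+u. indicator {0<..} u * abel_dens \<rho> u * w u \<partial>lborel)"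
    unfolding frakA_def by (rule nn_integral_density) auto
  also have "\<dots> = (\<integral>\<^sup>+u. (\<integral>\<^sup>+s. w u * (indicator {0<..} u * abel_kernel u s) \<partial>\<rho>) \<partial>lborel)"
  proof (rule nn_integral_cong)
    fix u
    have "(\<integral>\<^sup>+s. (w u * indicator {0<..} u) * abel_kernel u s \<partial>\<rho>) = w u * indicator {0<..} u * abel_dens \<rho> u"
      unfolding abel_dens_eq_nn_integral_kernel
      by (rule nn_integral_cmult) (rule abel_kernel_measurable[OF sets])
    thus "indicator {0<..} u * abel_dens \<rho> u * w u
        = (\<integral>\<^sup>+s. w u * (indicator {0<..} u * abel_kernel u s) \<partial>\<rho>)"
      by (simp add: mult_ac)
  qed
  also have "\<dots> = (\<integral>\<^sup>+s. (\<integral>\<^sup>+u. w u * (indicator {0<..} u * abel_kernel u s) \<partial>lborel) \<partial>\<rho>)"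
  proof (rule Fubini'[symmetric])
    have "(\<lambda>(u, s). w u * (indicator {0<..} u * abel_kernel u s)) \<in> borel_measurable (borel \<Otimes>\<^sub>M borel)"
      by measurable
    thus "(\<lambda>(u, s). w u * (indicator {0<..} u * abel_kernel u s)) \<in> borel_measurable (lborel \<Otimes>\<^sub>M \<rho>)"
      by (subst measurable_cong_sets[OF sets_pair_measure_cong[OF sets_lborel sets] refl])
  qed
  finally show ?thesis .
qed

lemma abel_kernel_pos_eq:
  "indicator {0<..} u * abel_kernel u s
     = ennreal (1 / sqrt pi) * (ennreal (1 / sqrt (s - u)) * indicator {0<..<s} u)"
  by (cases "0 < u \<and> u < s") (auto simp: abel_kernel_def indicator_def ennreal_mult[symmetric])

lemma frakA_set_nn_integral_powr_le:
  fixes \<alpha> :: real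
  assumes mp: "measure_on_pos \<rho>" and df: "frakA_definable \<rho>"
    and [measurable]: "A \<in> sets borel" "g \<in> borel_measurable borel"
    and bound: "\<And>s. 0 < s \<Longrightarrow> (\<integral>\<^sup>+u\<in>A \<inter> {0<..<s}. ennreal (u powr \<alpha> / sqrt (s - u)) \<partial>lborel) \<le> g s"
  shows "(\<integral>\<^sup>+u\<in>A. ennreal (u powr \<alpha>) \<partial>frakA \<rho>) \<le> ennreal (1 / sqrt pi) * (\<integral>\<^sup>+s. g s \<partial>\<rho>)"
proof -
  have sets: "sets \<rho> = sets borel" using mp by (simp add: measure_on_pos_def)
  have kernel: "ennreal (u powr \<alpha>) * indicator A u * (indicator {0<..} u * abel_kernel u s)
      = ennreal (1 / sqrt pi) * (ennreal (u powr \<alpha> / sqrt (s - u)) * indicator (A \<inter> {0<..<s}) u)"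
    for u s
    unfolding abel_kernel_pos_eq
    by (cases "u \<in> A \<inter> {0<..<s}") (auto simp: indicator_def ennreal_mult[symmetric])
  have "(\<integral>\<^sup>+u\<in>A. ennreal (u powr \<alpha>) \<partial>frakA \<rho>)
      = (\<integral>\<^sup>+s. (\<integral>\<^sup>+u. ennreal (u powr \<alpha>) * indicator A u * (indicator {0<..} u * abel_kernel u s) \<partial>lborel) \<partial>\<rho>)"
    by (rule nn_integral_frakA[OF mp df]) measurable
  also have "\<dots> = (\<integral>\<^sup>+s. ennreal (1 / sqrt pi)
                      * (\<integral>\<^sup>+u\<in>A \<inter> {0<..<s}. ennreal (u powr \<alpha> / sqrt (s - u)) \<partial>lborel) \<partial>\<rho>)"
    unfolding kernel by (intro nn_integral_cong nn_integral_cmult) measurable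
  also have "\<dots> \<le> (\<integral>\<^sup>+s. ennreal (1 / sqrt pi) * g s \<partial>\<rho>)"
  proof (intro nn_integral_mono mult_left_mono)
    fix s show "(\<integral>\<^sup>+u\<in>A \<inter> {0<..<s}. ennreal (u powr \<alpha> / sqrt (s - u)) \<partial>lborel) \<le> g s"
      using bound[of s] by (cases "0 < s") auto
  qed simp
  also have "\<dots> = ennreal (1 / sqrt pi) * (\<integral>\<^sup>+s. g s \<partial>\<rho>)"
    by (rule nn_integral_cmult) (simp add: measurable_cong_sets[OF sets refl])
  finally show ?thesis .
qed

lemma frakA_moment_above:
  fixes \<alpha> b :: real
  assumes \<alpha>: "\<alpha> > -1" and mp: "measure_on_pos \<rho>" and df: "frakA_definable \<rho>"
  shows "(\<integral>\<^sup>+u\<in>{b<..}. ennreal (u powr \<alpha>) \<partial>frakA \<rho>)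
           \<le> ennreal (Beta (\<alpha> + 1) (1/2) / sqrt pi) * (\<integral>\<^sup>+s\<in>{b<..}. ennreal (s powr (\<alpha> + 1/2)) \<partial>\<rho>)"
proof -
  define B where "B = Beta (\<alpha> + 1) (1/2)"
  have B: "B \<ge> 0" using \<alpha> by (simp add: B_def Beta_real_nonneg)
  have sets: "sets \<rho> = sets borel" using mp by (simp add: measure_on_pos_def)
  have bound: "(\<integral>\<^sup>+u\<in>{b<..} \<inter> {0<..<s}. ennreal (u powr \<alpha> / sqrt (s - u)) \<partial>lborel)
      \<le> ennreal B * (ennreal (s powr (\<alpha> + 1/2)) * indicator {b<..} s)" if s: "0 < s" for s
  proof (cases "b < s")
    case True
    have "(\<integral>\<^sup>+u\<in>{b<..} \<inter> {0<..<s}. ennreal (u powr \<alpha> / sqrt (s - u)) \<partial>lborel)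
        \<le> (\<integral>\<^sup>+u\<in>{0<..<s}. ennreal (u powr \<alpha> / sqrt (s - u)) \<partial>lborel)"
      by (intro nn_integral_mono) (auto simp: indicator_def)
    also have "\<dots> = ennreal (B * s powr (\<alpha> + 1/2))"
      unfolding B_def by (rule nn_integral_powr_div_sqrt_diff[OF \<alpha> s])
    finally show ?thesis using True B by (simp add: ennreal_mult)
  next
    case False
    hence "{b<..} \<inter> {0<..<s} = {}" by auto
    thus ?thesis by simp
  qed
  have "(\<integral>\<^sup>+u\<in>{b<..}. ennreal (u powr \<alpha>) \<partial>frakA \<rho>)
      \<le> ennreal (1 / sqrt pi) * (\<integral>\<^sup>+s. ennreal B * (ennreal (s powr (\<alpha> + 1/2)) * indicator {b<..} s) \<partial>\<rho>)"
    by (rule frakA_set_nn_integral_powr_le[OF mp df _ _ bound]) simp_all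
  also have "\<dots> = ennreal (1 / sqrt pi) * ennreal B * (\<integral>\<^sup>+s\<in>{b<..}. ennreal (s powr (\<alpha> + 1/2)) \<partial>\<rho>)"
    by (simp add: nn_integral_cmult measurable_cong_sets[OF sets refl] mult.assoc)
  also have "ennreal (1 / sqrt pi) * ennreal B = ennreal (B / sqrt pi)"
    using B by (simp add: ennreal_mult[symmetric])
  finally show ?thesis unfolding B_def .
qed

lemma frakA_moment_below:
  fixes \<alpha> b :: real
  assumes \<alpha>: "\<alpha> > -1" and b: "b > 0"
  obtains C where
    "\<And>\<rho>. measure_on_pos \<rho> \<Longrightarrow> frakA_definable \<rho> \<Longrightarrow>
       (\<integral>\<^sup>+u\<in>{0<..b}. ennreal (u powr \<alpha>) \<partial>frakA \<rho>)
         \<le> ennreal C * ((\<integral>\<^sup>+s\<in>{0<..b}. ennreal (s powr (\<alpha> + 1/2)) \<partial>\<rho>)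
                         + (\<integral>\<^sup>+s\<in>{b<..}. ennreal (s powr (-1/2)) \<partial>\<rho>))"
proof -
  obtain K where K: "K \<ge> 0" and bound: "\<And>s. 0 < s \<Longrightarrow>
      (\<integral>\<^sup>+u\<in>{0<..b} \<inter> {0<..<s}. ennreal (u powr \<alpha> / sqrt (s - u)) \<partial>lborel)
        \<le> ennreal K * (ennreal (s powr (\<alpha> + 1/2)) * indicator {0<..b} s
                        + ennreal (s powr (-1/2)) * indicator {b<..} s)"
    using nn_integral_Ioc_powr_div_sqrt_diff_bound[OF \<alpha> b] by blast
  show ?thesis
  proof (rule that)
    fix \<rho> assume mp: "measure_on_pos \<rho>" and df: "frakA_definable \<rho>"
    have sets: "sets \<rho> = sets borel" using mp by (simp add: measure_on_pos_def)
    have "(\<integral>\<^sup>+u\<in>{0<..b}. ennreal (u powr \<alpha>) \<partial>frakA \<rho>)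
        \<le> ennreal (1 / sqrt pi) * (\<integral>\<^sup>+s. ennreal K * (ennreal (s powr (\<alpha> + 1/2)) * indicator {0<..b} s
                                          + ennreal (s powr (-1/2)) * indicator {b<..} s) \<partial>\<rho>)"
      by (rule frakA_set_nn_integral_powr_le[OF mp df _ _ bound]) simp_all
    also have "\<dots> = ennreal (1 / sqrt pi) * ennreal K * ((\<integral>\<^sup>+s\<in>{0<..b}. ennreal (s powr (\<alpha> + 1/2)) \<partial>\<rho>)
                                                   + (\<integral>\<^sup>+s\<in>{b<..}. ennreal (s powr (-1/2)) \<partial>\<rho>))"
      by (simp add: nn_integral_cmult nn_integral_add measurable_cong_sets[OF sets refl] mult.assoc)
    also have "ennreal (1 / sqrt pi) * ennreal K = ennreal (K / sqrt pi)"
      using K by (simp add: ennreal_mult[symmetric])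
    finally show "(\<integral>\<^sup>+u\<in>{0<..b}. ennreal (u powr \<alpha>) \<partial>frakA \<rho>)
        \<le> ennreal (K / sqrt pi) * ((\<integral>\<^sup>+s\<in>{0<..b}. ennreal (s powr (\<alpha> + 1/2)) \<partial>\<rho>)
                                   + (\<integral>\<^sup>+s\<in>{b<..}. ennreal (s powr (-1/2)) \<partial>\<rho>))" .
  qed
qed

theorem lemma2p7:
  fixes \<alpha> b :: real
  assumes "\<alpha> > -1" and "b > 0"
  shows "\<exists>C1 C2 :: real. \<forall>\<rho>. measure_on_pos \<rho> \<longrightarrow> frakA_definable \<rho> \<longrightarrow>
      (\<integral>\<^sup>+ u\<in>{b<..}. ennreal (u powr \<alpha>) \<partial>frakA \<rho>)
        \<le> ennreal C1 * (\<integral>\<^sup>+ s\<in>{b<..}. ennreal (s powr (\<alpha> + 1/2)) \<partial>\<rho>)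
    \<and> (\<integral>\<^sup>+ u\<in>{0<..b}. ennreal (u powr \<alpha>) \<partial>frakA \<rho>)
        \<le> ennreal C2 * ((\<integral>\<^sup>+ s\<in>{0<..b}. ennreal (s powr (\<alpha> + 1/2)) \<partial>\<rho>)
                        + (\<integral>\<^sup>+ s\<in>{b<..}. ennreal (s powr (-1/2)) \<partial>\<rho>))"
  by (rule frakA_moment_below[OF assms]) (use frakA_moment_above[OF assms(1)] in blast)

end
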